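(* Consider the variation of the temporal graph discovery game in which the Discoverer does not learn the static edge set (only the node set). Let $n,T_{\max}\in\mathbb N^+$, $k\in[n]$, $m\in[\binom n2-n]$ and $\delta\in[T_{\max}]$. Then there is an Adversary such that any algorithm winning this game variation on graphs with $n$ nodes and $m$ edges must take at least $\lfloor nT_{\max}/(2\delta k)\rfloor$ rounds. Moreover, this Adversary picks a graph with at most two $\delta$-edge connected components.
   Context: A temporal graph $\mathcal G=(V,E,\lambda)$ with lifetime $T_{\max}$ consists of a finite undirected static graph $(V,E)$ and a labeling $\lambda:E\to\{1,\dots,T_{\max}\}$; edge $e$ is present only at time $\lambda(e)$. $[x]=\{1,\dots,x\}$. Infection model with parameter $\delta$: a set $S\subseteq V\times[0,T_{\max}]$ of at most $k$ seed infections is given; a seed $(u,t)$ makes $u$ infected at time $t$; otherwise a susceptible node $u$ becomes infected at time $t$ iff some neighbour $v$ infectious at time $t$ has $\lambda(uv)=t$ (exactly one infector recorded if several exist). A node infected at time $t$ is infectious at times $t+1,\dots,t+\delta$ and resistant afterwards. The infection log records triples $(u,v,t)$ ($u$ infected $v$ at time $t$). Game (unknown static graph variant): the Discoverer knows only $V$; each round it submits at most $k$ seeds and the Adversary answers with an infection log consistent with the seeds under some temporal graph on $V$ consistent with all previous answers (adaptive). The Discoverer wins iff the temporal graph (edges and labels) it finally submits equals the Adversary's final temporal graph consistent with all logs. $\delta$-edge connected components: relate two edges sharing an endpoint whose labels differ by at most $\delta$; the classes of the transitive closure are the $\delta$-edge connected components. *)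

theory Defs
  imports Main
begin

text \<open>Nodes are 0..<n. A temporal graph is a partial map from 2-element node sets
  (the static edges) to their time labels; its domain is the static edge set.\<close>
type_synonym tgraph = "nat set \<Rightarrow> nat option"

definition wf_tgraph :: "nat \<Rightarrow> nat \<Rightarrow> tgraph \<Rightarrow> bool" where
  "wf_tgraph n Tmax G \<longleftrightarrow>
     (\<forall>e \<in> dom G. \<exists>u v. e = {u, v} \<and> u \<noteq> v \<and> u < n \<and> v < n) \<and>
     (\<forall>t \<in> ran G. 1 \<le> t \<and> t \<le> Tmax)"

definition delta_rel :: "nat \<Rightarrow> tgraph \<Rightarrow> (nat set \<times> nat set) set" where
  "delta_rel \<delta> G = {(e, f). e \<in> dom G \<and> f \<in> dom G \<and> e \<inter> f \<noteq> {} \<and>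
      the (G e) \<le> the (G f) + \<delta> \<and> the (G f) \<le> the (G e) + \<delta>}"

definition delta_components :: "nat \<Rightarrow> tgraph \<Rightarrow> nat set set set" where
  "delta_components \<delta> G = dom G // ((delta_rel \<delta> G)\<^sup>*)"

text \<open>Infection process. it v = Some t means v gets infected at time t.\<close>
definition infectious :: "nat \<Rightarrow> (nat \<Rightarrow> nat option) \<Rightarrow> nat \<Rightarrow> nat \<Rightarrow> bool" where
  "infectious \<delta> it u s \<longleftrightarrow> (\<exists>t. it u = Some t \<and> t < s \<and> s \<le> t + \<delta>)"

definition infection_cause ::
  "nat \<Rightarrow> tgraph \<Rightarrow> (nat \<times> nat) set \<Rightarrow> (nat \<Rightarrow> nat option) \<Rightarrow> nat \<Rightarrow> nat \<Rightarrow> bool" where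
  "infection_cause \<delta> G S it v s \<longleftrightarrow>
     (v, s) \<in> S \<or> (\<exists>u. G {u, v} = Some s \<and> infectious \<delta> it u s)"

text \<open>L is a valid infection log of G for seed set S (triples (u,v,t): u infected v at t).\<close>
definition is_log ::
  "nat \<Rightarrow> tgraph \<Rightarrow> (nat \<times> nat) set \<Rightarrow> (nat \<times> nat \<times> nat) set \<Rightarrow> bool" where
  "is_log \<delta> G S L \<longleftrightarrow> (\<exists>it.
     (\<forall>v t. it v = Some t \<longleftrightarrow>
        (infection_cause \<delta> G S it v t \<and> (\<forall>s<t. \<not> infection_cause \<delta> G S it v s))) \<and>
     (\<forall>v. it v = None \<longrightarrow> (\<forall>s. \<not> infection_cause \<delta> G S it v s)) \<and>
     (\<forall>(u, v, t) \<in> L. it v = Some t \<and> (v, t) \<notin> S \<and> G {u, v} = Some t \<and> infectious \<delta> it u t) \<and>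
     (\<forall>v t. it v = Some t \<and> (v, t) \<notin> S \<longrightarrow> (\<exists>u. (u, v, t) \<in> L)) \<and>
     (\<forall>u v t u' t'. (u, v, t) \<in> L \<and> (u', v, t') \<in> L \<longrightarrow> u = u' \<and> t = t'))"

definition valid_seeds :: "nat \<Rightarrow> nat \<Rightarrow> nat \<Rightarrow> (nat \<times> nat) set \<Rightarrow> bool" where
  "valid_seeds n Tmax k S \<longleftrightarrow> finite S \<and> card S \<le> k \<and> S \<subseteq> {0..<n} \<times> {0..Tmax}"

text \<open>Adversary: maps the list of all seed sets submitted so far (the last one being the
  current query) to the log it answers.  G is consistent with all answers to qs.\<close>
definition consistent_with ::
  "nat \<Rightarrow> ((nat \<times> nat) set list \<Rightarrow> (nat \<times> nat \<times> nat) set) \<Rightarrow> (nat \<times> nat) set list \<Rightarrow> tgraph \<Rightarrow> bool" where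
  "consistent_with \<delta> adv qs G \<longleftrightarrow>
     (\<forall>i < length qs. is_log \<delta> G (qs ! i) (adv (take (Suc i) qs)))"

definition in_class :: "nat \<Rightarrow> nat \<Rightarrow> nat \<Rightarrow> nat \<Rightarrow> tgraph \<Rightarrow> bool" where
  "in_class n m Tmax \<delta> G \<longleftrightarrow> wf_tgraph n Tmax G \<and> card (dom G) = m \<and>
     card (delta_components \<delta> G) \<le> 2"

end

theory Submission
  imports Defs
begin

(*
  The Adversary fixes a set D of m - 1 chords of the n-cycle 0, 1, ..., n - 1 that is connected
  under sharing endpoints, labels all of them Tmax, and hides one further edge: a cycle edge p
  with a label s in [1, Tmax]. While some candidate graph admits it, the Adversary answers each
  query with an infection log of D alone. Through D, nodes get infected only at time Tmax, so
  the hidden edge can transmit only from a seed (a, r) with a in p and r < s <= r + delta;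
  unless some seed does this, every log of D is also a log of D plus (p, s). A node lies on two
  cycle edges, so a seed rules out at most 2 delta of the n Tmax candidates (p, s), and with k
  seeds per round fewer than n Tmax / (2 delta k) rounds leave two candidates, i.e. two
  different graphs consistent with all answers. As D is connected and uniformly labelled,
  every candidate has at most two delta-edge connected components.
*)

section \<open>Existence of infection logs\<close>

context
  fixes \<delta> :: nat and G :: tgraph and S :: "(nat \<times> nat) set"
begin

(* infection_stage t holds the infection times up to t; whether a node is infected at time
   t + 1 depends only on these. *)
fun infection_stage :: "nat \<Rightarrow> nat \<Rightarrow> nat option" where
  "infection_stage 0 = (\<lambda>v. if infection_cause \<delta> G S (\<lambda>_. None) v 0 then Some 0 else None)"
| "infection_stage (Suc t) = (\<lambda>v. case infection_stage t v of
      Some r \<Rightarrow> Some r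
    | None \<Rightarrow> if infection_cause \<delta> G S (infection_stage t) v (Suc t) then Some (Suc t) else None)"

lemma infection_stage_le: "infection_stage t v = Some r \<Longrightarrow> r \<le> t \<and> infection_stage r v = Some r"
proof (induction t arbitrary: r)
  case 0
  then show ?case by (auto split: if_splits)
next
  case (Suc t)
  then show ?case by (cases "infection_stage t v") (auto split: if_splits)
qed

lemma infection_stage_mono:
  "infection_stage t v = Some r \<Longrightarrow> t \<le> t' \<Longrightarrow> infection_stage t' v = Some r"
  by (induction t') (auto simp: le_Suc_eq split: option.splits if_splits)

definition infection_time :: "nat \<Rightarrow> nat option" where
  "infection_time v = (if \<exists>t. infection_stage t v = Some t
     then Some (LEAST t. infection_stage t v = Some t) else None)"

lemma infection_time_eq_Some_iff: "infection_time v = Some r \<longleftrightarrow> infection_stage r v = Some r"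
proof
  assume "infection_time v = Some r"
  then have ex: "\<exists>t. infection_stage t v = Some t" and r: "r = (LEAST t. infection_stage t v = Some t)"
    unfolding infection_time_def by (auto split: if_splits)
  show "infection_stage r v = Some r"
    unfolding r by (rule LeastI_ex[OF ex])
next
  assume r: "infection_stage r v = Some r"
  have uniq: "t = r" if t: "infection_stage t v = Some t" for t
    using infection_stage_mono[OF t, of "max t r"] infection_stage_mono[OF r, of "max t r"] by simp
  have "(LEAST t. infection_stage t v = Some t) = r"
    by (rule Least_equality[where P = "\<lambda>t. infection_stage t v = Some t", OF r]) (drule uniq, simp)
  moreover have "\<exists>t. infection_stage t v = Some t"
    using r by blast
  ultimately show "infection_time v = Some r"
    unfolding infection_time_def by (simp only: if_True)
qed

lemma infection_cause_infection_time_0: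
  "infection_cause \<delta> G S infection_time v 0 \<longleftrightarrow> infection_cause \<delta> G S (\<lambda>_. None) v 0"
  unfolding infection_cause_def infectious_def by auto

lemma infection_cause_infection_time_Suc:
  "infection_cause \<delta> G S infection_time v (Suc t) \<longleftrightarrow>
   infection_cause \<delta> G S (infection_stage t) v (Suc t)"
proof -
  have "infectious \<delta> infection_time u (Suc t) \<longleftrightarrow> infectious \<delta> (infection_stage t) u (Suc t)" for u
    unfolding infectious_def infection_time_eq_Some_iff
    by (metis less_Suc_eq_le infection_stage_le infection_stage_mono)
  then show ?thesis
    unfolding infection_cause_def by blast
qed

lemma infection_stage_eq_iff:
  "(infection_stage t v = None \<longleftrightarrow> (\<forall>s\<le>t. \<not> infection_cause \<delta> G S infection_time v s)) \<and>
   (infection_stage t v = Some t \<longleftrightarrow> infection_cause \<delta> G S infection_time v t \<and>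
      (\<forall>s<t. \<not> infection_cause \<delta> G S infection_time v s))"
proof (induction t)
  case 0
  then show ?case using infection_cause_infection_time_0 by auto
next
  case (Suc t)
  have none_iff: "infection_stage (Suc t) v = None \<longleftrightarrow>
      infection_stage t v = None \<and> \<not> infection_cause \<delta> G S infection_time v (Suc t)"
    using infection_cause_infection_time_Suc by (auto split: option.splits)
  have some_iff: "infection_stage (Suc t) v = Some (Suc t) \<longleftrightarrow>
      infection_stage t v = None \<and> infection_cause \<delta> G S infection_time v (Suc t)"
    using infection_cause_infection_time_Suc infection_stage_le[of t v]
    by (auto split: option.splits)
  have le: "(\<forall>s\<le>Suc t. \<not> P s) \<longleftrightarrow> (\<forall>s\<le>t. \<not> P s) \<and> \<not> P (Suc t)" for P
    by (auto simp: le_Suc_eq)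
  have less: "(\<forall>s<Suc t. \<not> P s) \<longleftrightarrow> (\<forall>s\<le>t. \<not> P s)" for P
    by (auto simp: less_Suc_eq_le)
  show ?case
    unfolding none_iff some_iff le less using conjunct1[OF Suc.IH] by blast
qed

lemma infection_time_eq_Some:
  "infection_time v = Some t \<longleftrightarrow> infection_cause \<delta> G S infection_time v t \<and>
     (\<forall>s<t. \<not> infection_cause \<delta> G S infection_time v s)"
  unfolding infection_time_eq_Some_iff using infection_stage_eq_iff by blast

lemma infection_time_eq_None:
  assumes "infection_time v = None"
  shows "\<not> infection_cause \<delta> G S infection_time v s"
proof -
  have "infection_stage s v = None"
  proof (rule ccontr)
    assume "infection_stage s v \<noteq> None"
    then obtain r where "infection_stage s v = Some r"
      by blast
    then have "infection_time v = Some r"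
      using infection_stage_le infection_time_eq_Some_iff by blast
    then show False
      using assms by simp
  qed
  then show ?thesis
    using infection_stage_eq_iff by blast
qed

end

lemma is_log_exists: "\<exists>L. is_log \<delta> G S L"
proof -
  define it where "it = infection_time \<delta> G S"
  define infector where
    "infector v t = (SOME u. G {u, v} = Some t \<and> infectious \<delta> it u t)" for v t
  define L where "L = {(u, v, t). it v = Some t \<and> (v, t) \<notin> S \<and> u = infector v t}"
  have infector: "G {infector v t, v} = Some t \<and> infectious \<delta> it (infector v t) t"
    if "it v = Some t" "(v, t) \<notin> S" for v t
  proof -
    have "\<exists>u. G {u, v} = Some t \<and> infectious \<delta> it u t"
      using that infection_time_eq_Some unfolding it_def infection_cause_def by blast
    then show ?thesis
      unfolding infector_def by (rule someI_ex)
  qed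
  show ?thesis
    unfolding is_log_def
  proof (intro exI[of _ L] exI[of _ it] conjI)
    show "\<forall>v t. it v = Some t \<longleftrightarrow> infection_cause \<delta> G S it v t \<and>
        (\<forall>s<t. \<not> infection_cause \<delta> G S it v s)"
      unfolding it_def using infection_time_eq_Some by blast
    show "\<forall>v. it v = None \<longrightarrow> (\<forall>s. \<not> infection_cause \<delta> G S it v s)"
      unfolding it_def using infection_time_eq_None by blast
    show "\<forall>(u, v, t) \<in> L. it v = Some t \<and> (v, t) \<notin> S \<and> G {u, v} = Some t \<and> infectious \<delta> it u t"
      unfolding L_def using infector by blast
  qed (auto simp: L_def)
qed

section \<open>Edges that no seed can use\<close>

definition exposed :: "nat \<Rightarrow> (nat \<times> nat) set \<Rightarrow> (nat set \<times> nat) set" where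
  "exposed \<delta> S = {(p, s). \<exists>(a, r) \<in> S. a \<in> p \<and> r < s \<and> s \<le> r + \<delta>}"

lemma exposed_mono: "S \<subseteq> S' \<Longrightarrow> exposed \<delta> S \<subseteq> exposed \<delta> S'"
  unfolding exposed_def by blast

(* All edges of G carry the last label T >= s, so only seeds can be infectious at time s. *)
lemma infection_cause_fun_upd_unexposed:
  assumes causes: "\<And>v t. it v = Some t \<Longrightarrow> infection_cause \<delta> G S it v t"
    and last_label: "\<forall>t \<in> ran G. t = T" and "p \<notin> dom G" and "s \<le> T"
    and unexposed: "(p, s) \<notin> exposed \<delta> S"
  shows "infection_cause \<delta> (G(p \<mapsto> s)) S it = infection_cause \<delta> G S it"
proof -
  have not_infectious: "\<not> infectious \<delta> it u s" if "u \<in> p" for u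
  proof
    assume "infectious \<delta> it u s"
    then obtain r where r: "it u = Some r" "r < s" "s \<le> r + \<delta>"
      unfolding infectious_def by blast
    then have "(u, r) \<in> S \<or> (\<exists>w. G {w, u} = Some r)"
      using causes unfolding infection_cause_def by blast
    then show False
    proof
      assume "(u, r) \<in> S"
      then show False
        using unexposed that r unfolding exposed_def by blast
    next
      assume "\<exists>w. G {w, u} = Some r"
      then show False
        using last_label r \<open>s \<le> T\<close> by (auto simp: ran_def)
    qed
  qed
  have "G {u, v} = Some t" if "(G(p \<mapsto> s)) {u, v} = Some t" "infectious \<delta> it u t" for u v t
    using that not_infectious by (cases "{u, v} = p") auto
  moreover have "(G(p \<mapsto> s)) {u, v} = Some t" if "G {u, v} = Some t" for u v t
    using that \<open>p \<notin> dom G\<close> by (cases "{u, v} = p") auto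
  ultimately show ?thesis
    unfolding infection_cause_def by (intro ext) blast
qed

lemma is_log_fun_upd_unexposed:
  assumes "is_log \<delta> G S L" and "\<forall>t \<in> ran G. t = T" and "p \<notin> dom G" and "s \<le> T"
    and "(p, s) \<notin> exposed \<delta> S"
  shows "is_log \<delta> (G(p \<mapsto> s)) S L"
proof -
  obtain it where
    it_Some: "\<forall>v t. it v = Some t \<longleftrightarrow>
        infection_cause \<delta> G S it v t \<and> (\<forall>s<t. \<not> infection_cause \<delta> G S it v s)"
    and it_None: "\<forall>v. it v = None \<longrightarrow> (\<forall>s. \<not> infection_cause \<delta> G S it v s)"
    and log: "\<forall>(u, v, t) \<in> L. it v = Some t \<and> (v, t) \<notin> S \<and> G {u, v} = Some t \<and> infectious \<delta> it u t"
    and complete: "\<forall>v t. it v = Some t \<and> (v, t) \<notin> S \<longrightarrow> (\<exists>u. (u, v, t) \<in> L)"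
    and unique: "\<forall>u v t u' t'. (u, v, t) \<in> L \<and> (u', v, t') \<in> L \<longrightarrow> u = u' \<and> t = t'"
    using assms(1) unfolding is_log_def by blast
  have cause_eq: "infection_cause \<delta> (G(p \<mapsto> s)) S it = infection_cause \<delta> G S it"
    using it_Some assms(2-5) by (intro infection_cause_fun_upd_unexposed) blast+
  have "(G(p \<mapsto> s)) e = Some t" if "G e = Some t" for e t
    using that \<open>p \<notin> dom G\<close> by auto
  then have log': "\<forall>(u, v, t) \<in> L. it v = Some t \<and> (v, t) \<notin> S \<and> (G(p \<mapsto> s)) {u, v} = Some t \<and>
      infectious \<delta> it u t"
    using log by blast
  show ?thesis
    unfolding is_log_def
  proof (intro exI[of _ it] conjI)
    show "\<forall>v t. it v = Some t \<longleftrightarrow> infection_cause \<delta> (G(p \<mapsto> s)) S it v t \<and>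
        (\<forall>r<t. \<not> infection_cause \<delta> (G(p \<mapsto> s)) S it v r)"
      unfolding cause_eq using it_Some by blast
    show "\<forall>v. it v = None \<longrightarrow> (\<forall>r. \<not> infection_cause \<delta> (G(p \<mapsto> s)) S it v r)"
      unfolding cause_eq using it_None by blast
  qed (fact log' complete unique)+
qed

section \<open>An adversary imitating a fixed graph\<close>

definition default_log :: "nat \<Rightarrow> tgraph \<Rightarrow> (nat \<times> nat) set \<Rightarrow> (nat \<times> nat \<times> nat) set" where
  "default_log \<delta> G S = (SOME L. is_log \<delta> G S L)"

lemma is_log_default_log: "is_log \<delta> G S (default_log \<delta> G S)"
  unfolding default_log_def using is_log_exists by (rule someI_ex)

(* The adversary keeps the graphs of C0 consistent with its answers so far (mimic_candidates
   takes the queries most recent first) and answers with the default log of GD whenever one of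
   them admits it. It is only ever applied to nonempty query lists. *)
definition mimic_answer ::
  "nat \<Rightarrow> tgraph \<Rightarrow> tgraph set \<Rightarrow> (nat \<times> nat) set \<Rightarrow> (nat \<times> nat \<times> nat) set" where
  "mimic_answer \<delta> GD C S =
     (if \<exists>G \<in> C. is_log \<delta> G S (default_log \<delta> GD S) then default_log \<delta> GD S
      else SOME L. \<exists>G \<in> C. is_log \<delta> G S L)"

primrec mimic_candidates :: "nat \<Rightarrow> tgraph set \<Rightarrow> tgraph \<Rightarrow> (nat \<times> nat) set list \<Rightarrow> tgraph set" where
  "mimic_candidates \<delta> C0 GD [] = C0"
| "mimic_candidates \<delta> C0 GD (S # qs) =
     {G \<in> mimic_candidates \<delta> C0 GD qs.
        is_log \<delta> G S (mimic_answer \<delta> GD (mimic_candidates \<delta> C0 GD qs) S)}"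

definition mimic_adversary ::
  "nat \<Rightarrow> tgraph set \<Rightarrow> tgraph \<Rightarrow> (nat \<times> nat) set list \<Rightarrow> (nat \<times> nat \<times> nat) set" where
  "mimic_adversary \<delta> C0 GD qs = mimic_answer \<delta> GD (mimic_candidates \<delta> C0 GD (tl (rev qs))) (last qs)"

lemma mem_mimic_candidates_iff:
  "G \<in> mimic_candidates \<delta> C0 GD (rev qs) \<longleftrightarrow>
   G \<in> C0 \<and> consistent_with \<delta> (mimic_adversary \<delta> C0 GD) qs G"
proof (induction qs rule: rev_induct)
  case Nil
  then show ?case by (simp add: consistent_with_def)
next
  case (snoc S qs)
  have "consistent_with \<delta> (mimic_adversary \<delta> C0 GD) (qs @ [S]) G \<longleftrightarrow>
        consistent_with \<delta> (mimic_adversary \<delta> C0 GD) qs G \<and>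
        is_log \<delta> G S (mimic_adversary \<delta> C0 GD (qs @ [S]))"
    unfolding consistent_with_def by (auto simp: nth_append less_Suc_eq)
  moreover have "mimic_adversary \<delta> C0 GD (qs @ [S]) =
      mimic_answer \<delta> GD (mimic_candidates \<delta> C0 GD (rev qs)) S"
    unfolding mimic_adversary_def by simp
  ultimately show ?case
    using snoc.IH by auto
qed

lemma mimic_candidates_nonempty: "C0 \<noteq> {} \<Longrightarrow> mimic_candidates \<delta> C0 GD qs \<noteq> {}"
proof (induction qs)
  case Nil
  then show ?case by simp
next
  case (Cons S qs)
  let ?C = "mimic_candidates \<delta> C0 GD qs"
  show ?case
  proof (cases "\<exists>G \<in> ?C. is_log \<delta> G S (default_log \<delta> GD S)")
    case True
    then show ?thesis by (auto simp: mimic_answer_def)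
  next
    case False
    have "\<exists>L. \<exists>G \<in> ?C. is_log \<delta> G S L"
      using Cons is_log_exists by blast
    then have "\<exists>G \<in> ?C. is_log \<delta> G S (SOME L. \<exists>G \<in> ?C. is_log \<delta> G S L)"
      by (rule someI_ex)
    then show ?thesis
      using False by (auto simp: mimic_answer_def)
  qed
qed

lemma mimic_candidates_if_mimics:
  assumes "G \<in> C0" and "\<forall>S \<in> set qs. is_log \<delta> G S (default_log \<delta> GD S)"
  shows "G \<in> mimic_candidates \<delta> C0 GD qs"
  using assms
proof (induction qs)
  case Nil
  then show ?case by simp
next
  case (Cons S qs)
  then have "G \<in> mimic_candidates \<delta> C0 GD qs" and "is_log \<delta> G S (default_log \<delta> GD S)"
    by simp_all
  then show ?case
    by (auto simp: mimic_answer_def)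
qed

lemma mimic_adversary_consistent:
  assumes "C0 \<noteq> {}"
  shows "\<exists>G \<in> C0. consistent_with \<delta> (mimic_adversary \<delta> C0 GD) qs G"
proof -
  obtain G where "G \<in> mimic_candidates \<delta> C0 GD (rev qs)"
    using mimic_candidates_nonempty[OF assms] by blast
  then show ?thesis
    unfolding mem_mimic_candidates_iff by blast
qed

lemma consistent_with_mimic_adversary:
  assumes "G \<in> C0" and "\<forall>S \<in> set qs. is_log \<delta> G S (default_log \<delta> GD S)"
  shows "consistent_with \<delta> (mimic_adversary \<delta> C0 GD) qs G"
proof -
  have "G \<in> mimic_candidates \<delta> C0 GD (rev qs)"
    using assms by (intro mimic_candidates_if_mimics) auto
  then show ?thesis
    unfolding mem_mimic_candidates_iff by blast
qed

section \<open>Cycle edges and chords\<close>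

definition cycle_edge :: "nat \<Rightarrow> nat \<Rightarrow> nat set" where
  "cycle_edge n i = {i, Suc i mod n}"

definition cycle_edges :: "nat \<Rightarrow> nat set set" where
  "cycle_edges n = cycle_edge n ` {..<n}"

definition node_pairs :: "nat \<Rightarrow> nat set set" where
  "node_pairs n = {e. e \<subseteq> {..<n} \<and> card e = 2}"

definition chords :: "nat \<Rightarrow> nat set set" where
  "chords n = node_pairs n - cycle_edges n"

lemma finite_node_pairs: "finite (node_pairs n)"
  unfolding node_pairs_def by (rule finite_subset[of _ "Pow {..<n}"]) auto

lemma card_node_pairs: "card (node_pairs n) = n choose 2"
  unfolding node_pairs_def using n_subsets[of "{..<n}" 2] by simp

lemma doubleton_in_node_pairs: "i \<noteq> j \<Longrightarrow> i < n \<Longrightarrow> j < n \<Longrightarrow> {i, j} \<in> node_pairs n"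
  unfolding node_pairs_def by auto

lemma node_pairsE:
  assumes "e \<in> node_pairs n"
  obtains i j where "e = {i, j}" "i < j" "j < n"
proof -
  obtain x y where "e = {x, y}" "x \<noteq> y" "x < n" "y < n"
    using assms unfolding node_pairs_def by (auto simp: card_2_iff)
  then show ?thesis
    using that by (metis insert_commute linorder_neqE_nat)
qed

lemma Suc_mod_if: "i < n \<Longrightarrow> Suc i mod n = (if Suc i = n then 0 else Suc i)"
  by auto

lemma inj_on_cycle_edge: "n \<ge> 3 \<Longrightarrow> inj_on (cycle_edge n) {..<n}"
proof (rule inj_onI)
  fix i j
  assume "n \<ge> 3" "i \<in> {..<n}" "j \<in> {..<n}" "cycle_edge n i = cycle_edge n j"
  then show "i = j"
    unfolding cycle_edge_def doubleton_eq_iff by (auto simp: Suc_mod_if split: if_splits)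
qed

lemma card_cycle_edges: "n \<ge> 3 \<Longrightarrow> card (cycle_edges n) = n"
  unfolding cycle_edges_def by (simp add: card_image inj_on_cycle_edge)

lemma cycle_edges_subset_node_pairs: "n \<ge> 2 \<Longrightarrow> cycle_edges n \<subseteq> node_pairs n"
proof
  fix e
  assume "n \<ge> 2" "e \<in> cycle_edges n"
  then obtain i where "i < n" "e = {i, Suc i mod n}"
    unfolding cycle_edges_def cycle_edge_def by blast
  moreover have "i \<noteq> Suc i mod n" "Suc i mod n < n"
    using \<open>n \<ge> 2\<close> \<open>i < n\<close> by (auto simp: Suc_mod_if)
  ultimately show "e \<in> node_pairs n"
    by (simp add: doubleton_in_node_pairs)
qed

lemma card_chords:
  assumes "n \<ge> 3"
  shows "card (chords n) = (n choose 2) - n"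
proof -
  have "cycle_edges n \<subseteq> node_pairs n"
    using assms by (intro cycle_edges_subset_node_pairs) simp
  then have "card (node_pairs n - cycle_edges n) = card (node_pairs n) - card (cycle_edges n)"
    by (intro card_Diff_subset) (auto intro: finite_subset finite_node_pairs)
  then show ?thesis
    using assms by (simp add: chords_def card_node_pairs card_cycle_edges)
qed

lemma four_le_if_less_choose_two:
  fixes n :: nat
  assumes "n < n choose 2"
  shows "4 \<le> n"
proof (rule ccontr)
  assume "\<not> 4 \<le> n"
  then have "n = 0 \<or> n = 1 \<or> n = 2 \<or> n = 3"
    by auto
  then have "n choose 2 \<le> n"
    by (auto simp: choose_two)
  then show False
    using assms by simp
qed

lemma finite_chords: "finite (chords n)"
  unfolding chords_def using finite_node_pairs by blast

lemma doubleton_in_cycle_edges_iff: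
  assumes "i < j" "j < n" "n \<ge> 3"
  shows "{i, j} \<in> cycle_edges n \<longleftrightarrow> j = Suc i \<or> (i = 0 \<and> j = n - 1)"
proof
  assume "{i, j} \<in> cycle_edges n"
  then obtain l where "l < n" "{i, j} = {l, Suc l mod n}"
    unfolding cycle_edges_def cycle_edge_def by auto
  then show "j = Suc i \<or> (i = 0 \<and> j = n - 1)"
    using assms unfolding doubleton_eq_iff by (auto simp: Suc_mod_if split: if_splits)
next
  assume "j = Suc i \<or> (i = 0 \<and> j = n - 1)"
  then have "{i, j} = cycle_edge n i \<or> {i, j} = cycle_edge n (n - 1)"
    using assms unfolding cycle_edge_def by auto
  then show "{i, j} \<in> cycle_edges n"
    using assms unfolding cycle_edges_def by auto
qed

lemma doubleton_in_chords_iff: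
  assumes "i < j" "j < n" "n \<ge> 3"
  shows "{i, j} \<in> chords n \<longleftrightarrow> j \<noteq> Suc i \<and> \<not> (i = 0 \<and> j = n - 1)"
  unfolding chords_def using doubleton_in_cycle_edges_iff[OF assms] doubleton_in_node_pairs assms by auto

lemma cycle_edges_containing:
  "{e \<in> cycle_edges n. a \<in> e} \<subseteq> {cycle_edge n a, cycle_edge n ((a + n - 1) mod n)}"
proof
  fix e
  assume "e \<in> {e \<in> cycle_edges n. a \<in> e}"
  then obtain i where i: "i < n" "e = cycle_edge n i" "a = i \<or> a = Suc i mod n"
    unfolding cycle_edges_def cycle_edge_def by auto
  then have "i = a \<or> i = (a + n - 1) mod n"
    by (auto simp: Suc_mod_if split: if_splits)
  then show "e \<in> {cycle_edge n a, cycle_edge n ((a + n - 1) mod n)}"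
    using i by auto
qed

section \<open>Connected sets of chords\<close>

definition meets :: "('a set \<times> 'a set) set" where
  "meets = {(e, f). e \<inter> f \<noteq> {}}"

definition rooted_connected :: "('a \<times> 'a) set \<Rightarrow> 'a set \<Rightarrow> 'a \<Rightarrow> bool" where
  "rooted_connected R F r \<longleftrightarrow> (\<forall>x \<in> F. (x, r) \<in> (R \<inter> F \<times> F)\<^sup>*)"

lemma rtrancl_enters:
  "(a, b) \<in> R\<^sup>* \<Longrightarrow> a \<notin> F \<Longrightarrow> b \<in> F \<Longrightarrow> \<exists>x y. (x, y) \<in> R \<and> x \<notin> F \<and> y \<in> F"
proof (induction rule: converse_rtrancl_induct)
  case base
  then show ?case by simp
next
  case (step a a')
  then show ?case by (cases "a' \<in> F") auto
qed

lemma rooted_connected_insert: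
  assumes conn: "rooted_connected R F r" and "(x, y) \<in> R" "y \<in> F"
  shows "rooted_connected R (insert x F) r"
  unfolding rooted_connected_def
proof
  fix z
  assume "z \<in> insert x F"
  have mono: "(R \<inter> F \<times> F)\<^sup>* \<subseteq> (R \<inter> insert x F \<times> insert x F)\<^sup>*"
    by (rule rtrancl_mono) auto
  have "(y, r) \<in> (R \<inter> insert x F \<times> insert x F)\<^sup>*"
    using conn \<open>y \<in> F\<close> mono unfolding rooted_connected_def by blast
  moreover have "(x, y) \<in> R \<inter> insert x F \<times> insert x F"
    using assms(2,3) by blast
  ultimately have "(x, r) \<in> (R \<inter> insert x F \<times> insert x F)\<^sup>*"
    by (rule converse_rtrancl_into_rtrancl[rotated])
  then show "(z, r) \<in> (R \<inter> insert x F \<times> insert x F)\<^sup>*"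
    using \<open>z \<in> insert x F\<close> conn mono unfolding rooted_connected_def by blast
qed

lemma rooted_connected_extend:
  assumes "rooted_connected R E r" "rooted_connected R F r" "r \<in> F" "F \<subset> E"
  shows "\<exists>x \<in> E - F. rooted_connected R (insert x F) r"
proof -
  obtain z where "z \<in> E" "z \<notin> F"
    using \<open>F \<subset> E\<close> by blast
  then have "(z, r) \<in> (R \<inter> E \<times> E)\<^sup>*"
    using assms(1) unfolding rooted_connected_def by blast
  then obtain x y where "(x, y) \<in> R \<inter> E \<times> E" "x \<notin> F" "y \<in> F"
    using rtrancl_enters[OF _ \<open>z \<notin> F\<close> \<open>r \<in> F\<close>] by blast
  then show ?thesis
    using rooted_connected_insert[OF assms(2)] by blast
qed

lemma rooted_connected_subset_of_card:
  assumes "finite E" "r \<in> E" "rooted_connected R E r" "1 \<le> j" "j \<le> card E"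
  shows "\<exists>F \<subseteq> E. card F = j \<and> r \<in> F \<and> rooted_connected R F r"
  using assms(4,5)
proof (induction j rule: nat_induct_at_least)
  case base
  have "rooted_connected R {r} r"
    unfolding rooted_connected_def by simp
  then show ?case
    using \<open>r \<in> E\<close> by (intro exI[of _ "{r}"]) simp
next
  case (Suc j)
  then obtain F where F: "F \<subseteq> E" "card F = j" "r \<in> F" "rooted_connected R F r"
    by (meson Suc_leD)
  have "F \<noteq> E"
    using F(2) Suc.prems by auto
  then obtain x where x: "x \<in> E - F" "rooted_connected R (insert x F) r"
    using rooted_connected_extend[OF assms(3) F(4,3)] F(1) by blast
  have "finite F"
    using F(1) \<open>finite E\<close> by (rule finite_subset)
  then have "card (insert x F) = Suc j"
    using x(1) F(2) by simp
  then show ?case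
    using F x by (intro exI[of _ "insert x F"]) blast
qed

lemma chord_reaches_chord_at_0:
  assumes "n \<ge> 5" "e \<in> chords n"
  shows "\<exists>c \<in> chords n. 0 \<in> c \<and> (e, c) \<in> (meets \<inter> chords n \<times> chords n)\<^sup>*"
proof -
  let ?R = "meets \<inter> chords n \<times> chords n"
  have chord: "{i, j} \<in> chords n" if "i < j" "j < n" "j \<noteq> Suc i" "\<not> (i = 0 \<and> j = n - 1)" for i j
    using that assms(1) by (simp add: doubleton_in_chords_iff)
  have step: "(a, b) \<in> ?R" if "a \<in> chords n" "b \<in> chords n" "a \<inter> b \<noteq> {}" for a b
    using that unfolding meets_def by blast
  have "e \<in> node_pairs n"
    using assms(2) unfolding chords_def by blast
  then obtain i j where e: "e = {i, j}" "i < j" "j < n"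
    by (rule node_pairsE)
  then have ij: "j \<noteq> Suc i" "\<not> (i = 0 \<and> j = n - 1)"
    using assms doubleton_in_chords_iff[of i j n] by simp_all
  consider "i = 0" | "i \<ge> 2" | "i = 1" "j \<le> n - 2" | "i = 1" "j = n - 1"
    using e ij by linarith
  then show ?thesis
  proof cases
    case 1
    then show ?thesis
      using assms(2) e by blast
  next
    case 2
    then have "(e, {0, i}) \<in> ?R"
      using step chord[of 0 i] assms(2) e by auto
    then show ?thesis
      using chord[of 0 i] 2 e by blast
  next
    case 3
    then have "(e, {0, j}) \<in> ?R"
      using step chord[of 0 j] assms(2) e by auto
    then show ?thesis
      using chord[of 0 j] 3 e by blast
  next
    case 4
    have chords_03: "{1, 3} \<in> chords n" "{0, 3} \<in> chords n"
      using chord[of 1 3] chord[of 0 3] assms(1) by auto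
    then have "(e, {1, 3}) \<in> ?R" "({1, 3}, {0, 3}) \<in> ?R"
      using step assms(2) e 4 by auto
    then show ?thesis
      using chords_03 by (blast intro: converse_rtrancl_into_rtrancl)
  qed
qed

lemma chords_rooted_connected:
  assumes "n \<ge> 5"
  shows "rooted_connected meets (chords n) {0, 2}"
  unfolding rooted_connected_def
proof
  let ?R = "meets \<inter> chords n \<times> chords n"
  have chord_02: "{0, 2} \<in> chords n"
    using assms by (simp add: doubleton_in_chords_iff)
  fix e
  assume "e \<in> chords n"
  then obtain c where c: "c \<in> chords n" "0 \<in> c" and "(e, c) \<in> ?R\<^sup>*"
    using chord_reaches_chord_at_0 assms by blast
  have "(c, {0, 2}) \<in> ?R"
    using c chord_02 unfolding meets_def by blast
  with \<open>(e, c) \<in> ?R\<^sup>*\<close> show "(e, {0, 2}) \<in> ?R\<^sup>*"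
    by (rule rtrancl_into_rtrancl)
qed

lemma connected_chords_exist:
  assumes "n \<ge> 4" "m < card (chords n)"
  shows "\<exists>D \<subseteq> chords n. card D = m \<and> (\<exists>r. rooted_connected meets D r)"
proof -
  have chord_02: "{0, 2} \<in> chords n"
    using assms(1) by (simp add: doubleton_in_chords_iff)
  have "card (chords 4) = 2"
    using card_chords[of 4] by (simp add: choose_two)
  then have "n \<ge> 5" if "m \<ge> 2"
    using assms that by (cases "n = 4") auto
  then consider "m = 0" | "m = 1" | "m \<ge> 2" "n \<ge> 5"
    by linarith
  then show ?thesis
  proof cases
    case 1
    then show ?thesis
      unfolding rooted_connected_def by (intro exI[of _ "{}"]) auto
  next
    case 2
    then show ?thesis
      using chord_02 unfolding rooted_connected_def by (intro exI[of _ "{{0, 2}}"]) auto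
  next
    case 3
    show ?thesis
      using rooted_connected_subset_of_card[of "chords n" "{0, 2}" meets m]
        finite_chords chord_02 chords_rooted_connected 3 assms(2) by auto
  qed
qed

section \<open>Graphs with a hidden cycle edge\<close>

definition uniform_tgraph :: "nat set set \<Rightarrow> nat \<Rightarrow> tgraph" where
  "uniform_tgraph D T = (\<lambda>e. if e \<in> D then Some T else None)"

lemma dom_uniform_tgraph [simp]: "dom (uniform_tgraph D T) = D"
  unfolding uniform_tgraph_def dom_def by simp

lemma card_delta_components_le_two:
  assumes "\<forall>e \<in> dom G - {p}. (e, r) \<in> (delta_rel \<delta> G)\<^sup>*"
  shows "card (delta_components \<delta> G) \<le> 2"
proof -
  let ?R = "(delta_rel \<delta> G)\<^sup>*"
  have "sym (delta_rel \<delta> G)"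
    unfolding sym_def delta_rel_def by auto
  then have equiv: "equiv UNIV ?R"
    by (intro equivI refl_rtrancl sym_rtrancl trans_rtrancl) auto
  have "?R `` {e} \<in> {?R `` {r}, ?R `` {p}}" if "e \<in> dom G" for e
  proof (cases "e = p")
    case True
    then show ?thesis by simp
  next
    case False
    then have "(e, r) \<in> ?R"
      using assms that by blast
    then show ?thesis
      using equiv_class_eq[OF equiv] by blast
  qed
  then have "delta_components \<delta> G \<subseteq> {?R `` {r}, ?R `` {p}}"
    unfolding delta_components_def quotient_def by blast
  then have "card (delta_components \<delta> G) \<le> card {?R `` {r}, ?R `` {p}}"
    by (rule card_mono[rotated]) simp
  also have "\<dots> \<le> 2"
    by (simp add: card_insert_if)
  finally show ?thesis .
qed

lemma wf_tgraphI:
  assumes "dom G \<subseteq> node_pairs n" and "ran G \<subseteq> {1..Tmax}"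
  shows "wf_tgraph n Tmax G"
  unfolding wf_tgraph_def
proof
  show "\<forall>e \<in> dom G. \<exists>u v. e = {u, v} \<and> u \<noteq> v \<and> u < n \<and> v < n"
  proof
    fix e
    assume "e \<in> dom G"
    then obtain i j where "e = {i, j}" "i < j" "j < n"
      using assms(1) node_pairsE by blast
    then show "\<exists>u v. e = {u, v} \<and> u \<noteq> v \<and> u < n \<and> v < n"
      by (intro exI[of _ i] exI[of _ j]) simp
  qed
  show "\<forall>t \<in> ran G. 1 \<le> t \<and> t \<le> Tmax"
    using assms(2) by auto
qed

lemma in_class_hidden_edge:
  assumes "n \<ge> 2" and D: "D \<subseteq> chords n" "card D = m - 1" "1 \<le> m" "rooted_connected meets D r"
    and p: "p \<in> cycle_edges n" and s: "1 \<le> s" "s \<le> Tmax"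
  shows "in_class n m Tmax \<delta> ((uniform_tgraph D Tmax)(p \<mapsto> s))"
proof -
  let ?G = "(uniform_tgraph D Tmax)(p \<mapsto> s)"
  have "p \<notin> D"
    using D(1) p unfolding chords_def by blast
  have "p \<in> node_pairs n"
    using p cycle_edges_subset_node_pairs \<open>n \<ge> 2\<close> by blast
  have dom_G: "dom ?G = insert p D"
    by simp
  have "dom ?G \<subseteq> node_pairs n"
    unfolding dom_G using D(1) \<open>p \<in> node_pairs n\<close> unfolding chords_def by blast
  moreover have "ran ?G \<subseteq> {1..Tmax}"
  proof
    fix t
    assume "t \<in> ran ?G"
    then obtain e where "?G e = Some t"
      unfolding ran_def by blast
    then have "t = s \<or> t = Tmax"
      by (cases "e = p"; cases "e \<in> D") (simp_all add: uniform_tgraph_def)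
    then show "t \<in> {1..Tmax}"
      using s by auto
  qed
  ultimately have "wf_tgraph n Tmax ?G"
    by (rule wf_tgraphI)
  moreover have "card (dom ?G) = m"
    using dom_G D(2,3) \<open>p \<notin> D\<close> finite_subset[OF D(1) finite_chords] by simp
  moreover have "meets \<inter> D \<times> D \<subseteq> delta_rel \<delta> ?G"
    using \<open>p \<notin> D\<close> unfolding meets_def delta_rel_def by (auto simp: uniform_tgraph_def)
  then have "(meets \<inter> D \<times> D)\<^sup>* \<subseteq> (delta_rel \<delta> ?G)\<^sup>*"
    by (rule rtrancl_mono)
  then have "\<forall>e \<in> dom ?G - {p}. (e, r) \<in> (delta_rel \<delta> ?G)\<^sup>*"
    using D(4) dom_G unfolding rooted_connected_def by blast
  then have "card (delta_components \<delta> ?G) \<le> 2"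
    by (rule card_delta_components_le_two)
  ultimately show ?thesis
    unfolding in_class_def by blast
qed

lemma is_log_hidden_edge:
  assumes "p \<notin> D" "s \<le> T" "(p, s) \<notin> exposed \<delta> S"
  shows "is_log \<delta> ((uniform_tgraph D T)(p \<mapsto> s)) S (default_log \<delta> (uniform_tgraph D T) S)"
proof (rule is_log_fun_upd_unexposed[OF is_log_default_log])
  show "\<forall>t \<in> ran (uniform_tgraph D T). t = T"
    unfolding uniform_tgraph_def ran_def by auto
qed (use assms in simp_all)

lemma fun_upd_inject_notin_dom:
  assumes "p \<notin> dom G" "q \<notin> dom G" "G(p \<mapsto> s) = G(q \<mapsto> t)"
  shows "(p, s) = (q, t)"
proof -
  have "(G(q \<mapsto> t)) p = Some s"
    using fun_cong[OF assms(3), of p] by simp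
  then have "p = q"
    using assms(1) by (auto split: if_splits)
  then show ?thesis
    using fun_cong[OF assms(3), of p] by simp
qed

section \<open>Counting the exposed hidden edges\<close>

lemma card_exposed_cycle_edges:
  assumes "finite X"
  shows "card ((cycle_edges n \<times> {1..T}) \<inter> exposed \<delta> X) \<le> 2 * \<delta> * card X"
proof -
  define K where "K x = {cycle_edge n (fst x), cycle_edge n ((fst x + n - 1) mod n)} \<times>
      {Suc (snd x)..snd x + \<delta>}" for x :: "nat \<times> nat"
  have "(cycle_edges n \<times> {1..T}) \<inter> exposed \<delta> X \<subseteq> (\<Union>x \<in> X. K x)"
  proof
    fix y
    assume "y \<in> (cycle_edges n \<times> {1..T}) \<inter> exposed \<delta> X"
    then obtain p s a r where "y = (p, s)" "p \<in> cycle_edges n" "(a, r) \<in> X" "a \<in> p" "r < s" "s \<le> r + \<delta>"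
      unfolding exposed_def by blast
    moreover have "p \<in> {cycle_edge n a, cycle_edge n ((a + n - 1) mod n)}"
      using cycle_edges_containing[of n a] calculation by blast
    ultimately show "y \<in> (\<Union>x \<in> X. K x)"
      unfolding K_def by force
  qed
  moreover have "finite (\<Union>x \<in> X. K x)"
    using assms unfolding K_def by blast
  ultimately have "card ((cycle_edges n \<times> {1..T}) \<inter> exposed \<delta> X) \<le> card (\<Union>x \<in> X. K x)"
    by (rule card_mono[rotated])
  also have "\<dots> \<le> (\<Sum>x \<in> X. card (K x))"
    using assms by (rule card_UN_le)
  also have "\<dots> \<le> (\<Sum>x \<in> X. 2 * \<delta>)"
    unfolding K_def by (intro sum_mono) (simp add: card_cartesian_product card_insert_if)
  finally show ?thesis
    by (simp add: mult.commute)
qed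

lemma card_Union_valid_seeds:
  assumes "\<forall>S \<in> set qs. valid_seeds n Tmax k S"
  shows "finite (\<Union>(set qs))" and "card (\<Union>(set qs)) \<le> length qs * k"
proof -
  show "finite (\<Union>(set qs))"
    using assms unfolding valid_seeds_def by auto
  have "card (\<Union>(set qs)) \<le> (\<Sum>S \<in> set qs. card S)"
    by (rule card_Union_le_sum_card)
  also have "\<dots> \<le> card (set qs) * k"
    using sum_bounded_above[of "set qs" card k] assms unfolding valid_seeds_def by auto
  also have "\<dots> \<le> length qs * k"
    by (simp add: card_length)
  finally show "card (\<Union>(set qs)) \<le> length qs * k" .
qed

lemma mult_add_two_le_if_less_div:
  fixes l N d :: nat
  assumes "l < N div d" and "2 \<le> d"
  shows "l * d + 2 \<le> N"
proof -
  have "Suc l * d \<le> N div d * d"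
    using assms(1) by (intro mult_right_mono) simp_all
  also have "\<dots> \<le> N"
    by simp
  finally show ?thesis
    using assms(2) by simp
qed

lemma two_unexposed_hidden_edges:
  assumes "n \<ge> 3" "1 \<le> k" "1 \<le> \<delta>" and valid: "\<forall>S \<in> set qs. valid_seeds n Tmax k S"
    and "length qs < n * Tmax div (2 * \<delta> * k)"
  shows "\<exists>x y. x \<noteq> y \<and> {x, y} \<subseteq> cycle_edges n \<times> {1..Tmax} - exposed \<delta> (\<Union>(set qs))"
proof -
  let ?O = "cycle_edges n \<times> {1..Tmax}"
  let ?E = "?O \<inter> exposed \<delta> (\<Union>(set qs))"
  have "card ?E \<le> 2 * \<delta> * card (\<Union>(set qs))"
    using card_exposed_cycle_edges card_Union_valid_seeds(1)[OF valid] by blast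
  also have "\<dots> \<le> length qs * (2 * \<delta> * k)"
    using card_Union_valid_seeds(2)[OF valid] by (simp add: algebra_simps)
  also have "\<dots> + 2 \<le> n * Tmax"
    using assms by (intro mult_add_two_le_if_less_div) simp_all
  finally have "card ?E + 2 \<le> card ?O"
    using \<open>n \<ge> 3\<close> by (simp add: card_cartesian_product card_cycle_edges)
  moreover have "card (?O - exposed \<delta> (\<Union>(set qs))) = card ?O - card ?E"
    by (rule card_Diff_subset_Int) (simp add: cycle_edges_def)
  ultimately have "2 \<le> card (?O - exposed \<delta> (\<Union>(set qs)))"
    by linarith
  then obtain B where "B \<subseteq> ?O - exposed \<delta> (\<Union>(set qs))" "card B = 2"
    by (meson obtain_subset_with_card_n)
  then show ?thesis
    unfolding card_2_iff by blast
qed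

lemma two_consistent_hidden_edge_graphs:
  assumes "n \<ge> 3" "1 \<le> k" "1 \<le> \<delta>" and "D \<inter> cycle_edges n = {}"
    and in_C0: "\<And>p s. (p, s) \<in> cycle_edges n \<times> {1..Tmax} \<Longrightarrow> (uniform_tgraph D Tmax)(p \<mapsto> s) \<in> C0"
    and valid: "\<forall>S \<in> set qs. valid_seeds n Tmax k S"
    and short: "length qs < n * Tmax div (2 * \<delta> * k)"
  shows "\<exists>G1 G2. G1 \<noteq> G2 \<and> G1 \<in> C0 \<and> G2 \<in> C0 \<and>
    consistent_with \<delta> (mimic_adversary \<delta> C0 (uniform_tgraph D Tmax)) qs G1 \<and>
    consistent_with \<delta> (mimic_adversary \<delta> C0 (uniform_tgraph D Tmax)) qs G2"
proof -
  let ?GD = "uniform_tgraph D Tmax"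
  let ?U = "cycle_edges n \<times> {1..Tmax} - exposed \<delta> (\<Union>(set qs))"
  have consistent: "consistent_with \<delta> (mimic_adversary \<delta> C0 ?GD) qs (?GD(p \<mapsto> s))"
    if "(p, s) \<in> ?U" for p s
  proof (rule consistent_with_mimic_adversary)
    show "?GD(p \<mapsto> s) \<in> C0"
      using in_C0 that by blast
    have "p \<notin> D" "s \<le> Tmax"
      using that \<open>D \<inter> cycle_edges n = {}\<close> by auto
    moreover have "(p, s) \<notin> exposed \<delta> S" if "S \<in> set qs" for S
      using \<open>(p, s) \<in> ?U\<close> exposed_mono[of S "\<Union>(set qs)" \<delta>] that by blast
    ultimately show "\<forall>S \<in> set qs. is_log \<delta> (?GD(p \<mapsto> s)) S (default_log \<delta> ?GD S)"
      by (blast intro: is_log_hidden_edge)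
  qed
  obtain x y where xy: "x \<noteq> y" "{x, y} \<subseteq> ?U"
    using two_unexposed_hidden_edges[OF assms(1-3) valid short] by blast
  obtain p s p' s' where x: "x = (p, s)" and y: "y = (p', s')"
    by (cases x; cases y) blast
  have unexposed: "(p, s) \<in> ?U" "(p', s') \<in> ?U"
    using xy(2) x y by auto
  have "p \<notin> dom ?GD" "p' \<notin> dom ?GD"
    using unexposed \<open>D \<inter> cycle_edges n = {}\<close> by auto
  then have "?GD(p \<mapsto> s) \<noteq> ?GD(p' \<mapsto> s')"
    using xy(1) x y fun_upd_inject_notin_dom[of p ?GD p' s s'] by blast
  moreover have "?GD(p \<mapsto> s) \<in> C0" "?GD(p' \<mapsto> s') \<in> C0"
    using in_C0 unexposed by simp_all
  ultimately show ?thesis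
    using consistent[OF unexposed(1)] consistent[OF unexposed(2)] by blast
qed

theorem mainTheorem13:
  fixes n Tmax k m \<delta> :: nat
  assumes "n \<ge> 1" and "Tmax \<ge> 1"
    and "1 \<le> k" and "k \<le> n"
    and "1 \<le> m" and "int m \<le> int (n choose 2) - int n"
    and "1 \<le> \<delta>" and "\<delta> \<le> Tmax"
  shows "\<exists>adv :: (nat \<times> nat) set list \<Rightarrow> (nat \<times> nat \<times> nat) set.
     (\<forall>qs. (\<forall>S \<in> set qs. valid_seeds n Tmax k S) \<longrightarrow>
        (\<exists>G. in_class n m Tmax \<delta> G \<and> consistent_with \<delta> adv qs G)) \<and>
     (\<forall>qs. (\<forall>S \<in> set qs. valid_seeds n Tmax k S) \<longrightarrow>
        length qs < n * Tmax div (2 * \<delta> * k) \<longrightarrow>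
        (\<exists>G1 G2. G1 \<noteq> G2 \<and> in_class n m Tmax \<delta> G1 \<and> in_class n m Tmax \<delta> G2 \<and>
           consistent_with \<delta> adv qs G1 \<and> consistent_with \<delta> adv qs G2))"
proof -
  have "n \<ge> 4"
    using assms(5,6) by (intro four_le_if_less_choose_two) linarith
  moreover have "m - 1 < card (chords n)"
    using assms(5,6) card_chords[of n] \<open>n \<ge> 4\<close> by linarith
  ultimately obtain D r where D: "D \<subseteq> chords n" "card D = m - 1" "rooted_connected meets D r"
    by (meson connected_chords_exist)
  define C0 where "C0 = Collect (in_class n m Tmax \<delta>)"
  define adv where "adv = mimic_adversary \<delta> C0 (uniform_tgraph D Tmax)"
  have in_C0: "(uniform_tgraph D Tmax)(p \<mapsto> s) \<in> C0" if "(p, s) \<in> cycle_edges n \<times> {1..Tmax}" for p s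
    using that in_class_hidden_edge[OF _ D(1,2) \<open>1 \<le> m\<close> D(3)] \<open>n \<ge> 4\<close> unfolding C0_def by simp
  have "(cycle_edge n 0, 1) \<in> cycle_edges n \<times> {1..Tmax}"
    using \<open>n \<ge> 4\<close> \<open>Tmax \<ge> 1\<close> unfolding cycle_edges_def by simp
  then have "C0 \<noteq> {}"
    using in_C0 by blast
  have "D \<inter> cycle_edges n = {}"
    using D(1) unfolding chords_def by blast
  show ?thesis
  proof (intro exI[of _ adv] conjI allI impI)
    fix qs
    show "\<exists>G. in_class n m Tmax \<delta> G \<and> consistent_with \<delta> adv qs G"
      using mimic_adversary_consistent[OF \<open>C0 \<noteq> {}\<close>] unfolding adv_def C0_def by blast
  next
    fix qs
    assume "\<forall>S \<in> set qs. valid_seeds n Tmax k S" "length qs < n * Tmax div (2 * \<delta> * k)"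
    then show "\<exists>G1 G2. G1 \<noteq> G2 \<and> in_class n m Tmax \<delta> G1 \<and> in_class n m Tmax \<delta> G2 \<and>
        consistent_with \<delta> adv qs G1 \<and> consistent_with \<delta> adv qs G2"
      using two_consistent_hidden_edge_graphs[OF _ assms(3,7) \<open>D \<inter> cycle_edges n = {}\<close> in_C0]
        \<open>n \<ge> 4\<close> unfolding adv_def C0_def by simp
  qed
qed

end
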